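(* Let $X$ be a metric space, $f\in\Delta(X)$, $x,y,\bar x,\bar y\in X$ with $\{x,y\},\{\bar x,\bar y\}\in A(f)$. Then each of the following conditions implies that also $\{x,\bar y\},\{\bar x,y\}\in A(f)$: (1) $d(x,y)+d(\bar x,\bar y)\le d(x,\bar y)+d(\bar x,y)$; (2) $C(x,y)\cap C(\bar x,\bar y)\neq\emptyset$; (3) $I(x,\bar y)\cap I(\bar x,y)\ne\emptyset$; (4) there exists $v\in I(x,y)\cap I(\bar x,\bar y)$ such that $C(x,v)=C(\bar x,v)$.
   Context: $\Delta(X)=\{f\colon X\to\mathbb R: f(x)+f(y)\ge d(x,y)\ \forall x,y\}$. $A(f)$ is the set of unordered pairs $\{x,y\}$ ($x=y$ allowed) with $f(x)+f(y)=d(x,y)$. $I(x,y)=\{v: d(x,v)+d(v,y)=d(x,y)\}$, and $C(x,v)=\{y\in X: v\in I(x,y)\}$. *)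

theory Defs
  imports "HOL-Analysis.Analysis"
begin

definition Delta :: "('a::metric_space \<Rightarrow> real) set" where
  "Delta = {f. \<forall>x y. f x + f y \<ge> dist x y}"

definition Apairs :: "('a::metric_space \<Rightarrow> real) \<Rightarrow> 'a set set" where
  "Apairs f = {{x, y} | x y. f x + f y = dist x y}"

definition Iv :: "'a::metric_space \<Rightarrow> 'a \<Rightarrow> 'a set" where
  "Iv x y = {v. dist x v + dist v y = dist x y}"

definition Cv :: "'a::metric_space \<Rightarrow> 'a \<Rightarrow> 'a set" where
  "Cv x v = {y. v \<in> Iv x y}"

end

theory Submission
  imports Defs
begin

text \<open>For \<open>f \<in> \<Delta>(X)\<close> the two swapped sums \<open>f x + f y'\<close> and \<open>f x' + f y\<close> dominate
  \<open>d(x,y')\<close> and \<open>d(x',y)\<close>, while their total equals \<open>d(x,y) + d(x',y')\<close>. Hence the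
  inequality (1) forces both to be equalities. Each of (2)--(4) implies (1) by the triangle
  inequality, applied through the common point of the cones or intervals.\<close>

lemma doubleton_in_Apairs_iff: "{x, y} \<in> Apairs f \<longleftrightarrow> f x + f y = dist x y"
  unfolding Apairs_def
  by (auto simp: doubleton_eq_iff dist_commute add.commute)

lemma Apairs_swap:
  assumes "f \<in> Delta"
    and "{x, y} \<in> Apairs f" and "{x', y'} \<in> Apairs f"
    and "dist x y + dist x' y' \<le> dist x y' + dist x' y"
  shows "{x, y'} \<in> Apairs f \<and> {x', y} \<in> Apairs f"
proof -
  have "f x + f y = dist x y" "f x' + f y' = dist x' y'"
    using assms(2,3) by (simp_all add: doubleton_in_Apairs_iff)
  moreover have "f x + f y' \<ge> dist x y'" "f x' + f y \<ge> dist x' y"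
    using assms(1) by (simp_all add: Delta_def)
  ultimately have "f x + f y' = dist x y'" "f x' + f y = dist x' y"
    using assms(4) by linarith+
  then show ?thesis
    by (simp add: doubleton_in_Apairs_iff)
qed

lemma quadrangle_ineq_if_Cv_meet:
  assumes "Cv x y \<inter> Cv x' y' \<noteq> {}"
  shows "dist x y + dist x' y' \<le> dist x y' + dist x' y"
proof -
  obtain z where "dist x y + dist y z = dist x z" "dist x' y' + dist y' z = dist x' z"
    using assms by (auto simp: Cv_def Iv_def)
  moreover have "dist x z \<le> dist x y' + dist y' z" "dist x' z \<le> dist x' y + dist y z"
    by (simp_all add: dist_triangle)
  ultimately show ?thesis
    by linarith
qed

lemma quadrangle_ineq_if_Iv_meet:
  assumes "Iv x y' \<inter> Iv x' y \<noteq> {}"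
  shows "dist x y + dist x' y' \<le> dist x y' + dist x' y"
proof -
  obtain v where "dist x v + dist v y' = dist x y'" "dist x' v + dist v y = dist x' y"
    using assms by (auto simp: Iv_def)
  moreover have "dist x y \<le> dist x v + dist v y" "dist x' y' \<le> dist x' v + dist v y'"
    by (simp_all add: dist_triangle)
  ultimately show ?thesis
    by linarith
qed

text \<open>Here the sum is even an equality: the common cone puts \<open>v\<close> on geodesics from \<open>x\<close> to
  \<open>y'\<close> and from \<open>x'\<close> to \<open>y\<close>.\<close>

lemma quadrangle_ineq_if_common_cone:
  assumes "v \<in> Iv x y \<inter> Iv x' y'" and cone: "Cv x v = Cv x' v"
  shows "dist x y + dist x' y' \<le> dist x y' + dist x' y"
proof -
  have "y \<in> Cv x v" "y' \<in> Cv x' v"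
    using assms(1) by (simp_all add: Cv_def)
  then have "v \<in> Iv x y'" "v \<in> Iv x' y"
    using cone by (auto simp: Cv_def)
  with assms(1) show ?thesis
    by (simp add: Iv_def)
qed

theorem lemma5p2:
  fixes f :: "'a::metric_space \<Rightarrow> real" and x y x' y' :: 'a
  assumes "f \<in> Delta"
    and "{x, y} \<in> Apairs f" and "{x', y'} \<in> Apairs f"
    and "dist x y + dist x' y' \<le> dist x y' + dist x' y
         \<or> Cv x y \<inter> Cv x' y' \<noteq> {}
         \<or> Iv x y' \<inter> Iv x' y \<noteq> {}
         \<or> (\<exists>v \<in> Iv x y \<inter> Iv x' y'. Cv x v = Cv x' v)"
  shows "{x, y'} \<in> Apairs f \<and> {x', y} \<in> Apairs f"
proof (rule Apairs_swap[OF assms(1-3)])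
  show "dist x y + dist x' y' \<le> dist x y' + dist x' y"
    using assms(4) quadrangle_ineq_if_Cv_meet quadrangle_ineq_if_Iv_meet
      quadrangle_ineq_if_common_cone
    by blast
qed

end
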